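(* Let $T$ be a tree of order at least $6$. Then $T\in\mathcal{O}'$ if and only if the set of weak support vertices of $T$ is a maximum $2$-packing in $T$.
   Context: A weak support vertex is a vertex adjacent to exactly one leaf. A $2$-packing of a graph $G$ is a set $S\subseteq V(G)$ whose vertices are pairwise at distance at least $3$; a maximum $2$-packing is one of maximum cardinality $\rho(G)$. $2$-subdivision: let $G$ be a connected graph of order at least $2$ and $\mathcal{P}=\{\mathcal{P}(v):v\in V(G)\}$ where $\mathcal{P}(v)$ is a partition of $N_G(v)$ (into nonempty blocks). $G(\mathcal{P})$ has vertex set $V(G)\cup(V(G)\times\{1\})\cup\bigcup_{v\in V(G)}(\{v\}\times\mathcal{P}(v))$ and edge set $E_1\cup E_2\cup E_3$, where $E_1=\{v(v,1):v\in V(G)\}$, $E_2=\{v(v,A): v\in V(G), A\in\mathcal{P}(v)\}$, and $E_3=\{(u,A)(v,B): uv\in E(G), A\in\mathcal{P}(u), B\in\mathcal{P}(v), v\in A, u\in B\}$. $\mathcal{O}'$ is the family of all trees isomorphic to some $R(\mathcal{P})$ where $R$ is a tree of order at least $2$ and $\mathcal{P}$ is such a family of partitions. *)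

theory Defs
  imports Main "HOL-Library.Extended_Nat" "HOL-Library.Disjoint_Sets"
begin

definition graph :: "'a set \<Rightarrow> 'a set set \<Rightarrow> bool" where
  "graph V E \<longleftrightarrow> finite V \<and> (\<forall>e\<in>E. \<exists>u v. e = {u, v} \<and> u \<noteq> v \<and> u \<in> V \<and> v \<in> V)"

definition walk :: "'a set \<Rightarrow> 'a set set \<Rightarrow> 'a list \<Rightarrow> bool" where
  "walk V E xs \<longleftrightarrow> xs \<noteq> [] \<and> set xs \<subseteq> V \<and>
     (\<forall>i. Suc i < length xs \<longrightarrow> {xs ! i, xs ! Suc i} \<in> E)"

definition connected_graph :: "'a set \<Rightarrow> 'a set set \<Rightarrow> bool" where
  "connected_graph V E \<longleftrightarrow>
     (\<forall>u\<in>V. \<forall>v\<in>V. \<exists>xs. walk V E xs \<and> hd xs = u \<and> last xs = v)"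

definition has_cycle :: "'a set \<Rightarrow> 'a set set \<Rightarrow> bool" where
  "has_cycle V E \<longleftrightarrow>
     (\<exists>xs. walk V E xs \<and> length xs \<ge> 3 \<and> distinct xs \<and> {last xs, hd xs} \<in> E)"

definition tree :: "'a set \<Rightarrow> 'a set set \<Rightarrow> bool" where
  "tree V E \<longleftrightarrow> graph V E \<and> V \<noteq> {} \<and> connected_graph V E \<and> \<not> has_cycle V E"

(* distance: length of a shortest walk (infinity if none) *)
definition gdist :: "'a set \<Rightarrow> 'a set set \<Rightarrow> 'a \<Rightarrow> 'a \<Rightarrow> enat" where
  "gdist V E u v = (INF xs \<in> {xs. walk V E xs \<and> hd xs = u \<and> last xs = v}. enat (length xs - 1))"

definition neighbors :: "'a set \<Rightarrow> 'a set set \<Rightarrow> 'a \<Rightarrow> 'a set" where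
  "neighbors V E v = {u \<in> V. {v, u} \<in> E}"

definition degree :: "'a set \<Rightarrow> 'a set set \<Rightarrow> 'a \<Rightarrow> nat" where
  "degree V E v = card (neighbors V E v)"

definition leaf :: "'a set \<Rightarrow> 'a set set \<Rightarrow> 'a \<Rightarrow> bool" where
  "leaf V E v \<longleftrightarrow> v \<in> V \<and> degree V E v = 1"

definition weak_supports :: "'a set \<Rightarrow> 'a set set \<Rightarrow> 'a set" where
  "weak_supports V E = {v \<in> V. card {u \<in> neighbors V E v. leaf V E u} = 1}"

definition two_packing :: "'a set \<Rightarrow> 'a set set \<Rightarrow> 'a set \<Rightarrow> bool" where
  "two_packing V E S \<longleftrightarrow> S \<subseteq> V \<and>
     (\<forall>u\<in>S. \<forall>v\<in>S. u \<noteq> v \<longrightarrow> gdist V E u v \<ge> 3)"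

definition max_two_packing :: "'a set \<Rightarrow> 'a set set \<Rightarrow> 'a set \<Rightarrow> bool" where
  "max_two_packing V E S \<longleftrightarrow> two_packing V E S \<and>
     (\<forall>S'. two_packing V E S' \<longrightarrow> card S' \<le> card S)"

(* vertices of the 2-subdivision G(P): v, (v,1), (v,A) *)
datatype 'a sv = Orig 'a | One 'a | Part 'a "'a set"

definition nbr_partitions :: "'a set \<Rightarrow> 'a set set \<Rightarrow> ('a \<Rightarrow> 'a set set) \<Rightarrow> bool" where
  "nbr_partitions V E P \<longleftrightarrow> (\<forall>v\<in>V. partition_on (neighbors V E v) (P v))"

definition subdiv_V :: "'a set \<Rightarrow> 'a set set \<Rightarrow> ('a \<Rightarrow> 'a set set) \<Rightarrow> 'a sv set" where
  "subdiv_V V E P = Orig ` V \<union> One ` V \<union> {Part v A | v A. v \<in> V \<and> A \<in> P v}"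

definition subdiv_E :: "'a set \<Rightarrow> 'a set set \<Rightarrow> ('a \<Rightarrow> 'a set set) \<Rightarrow> 'a sv set set" where
  "subdiv_E V E P =
     {{Orig v, One v} | v. v \<in> V}
   \<union> {{Orig v, Part v A} | v A. v \<in> V \<and> A \<in> P v}
   \<union> {{Part u A, Part v B} | u v A B. {u, v} \<in> E \<and> A \<in> P u \<and> B \<in> P v \<and> v \<in> A \<and> u \<in> B}"

definition graph_iso :: "'a set \<Rightarrow> 'a set set \<Rightarrow> 'b set \<Rightarrow> 'b set set \<Rightarrow> bool" where
  "graph_iso V E V' E' \<longleftrightarrow> (\<exists>f. bij_betw f V V' \<and>
     (\<forall>u\<in>V. \<forall>v\<in>V. {u, v} \<in> E \<longleftrightarrow> {f u, f v} \<in> E'))"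

(* membership in O': isomorphic to R(P) for a tree R of order >= 2 (vertices of R
   taken from nat without loss of generality, as R is finite) *)
definition in_O' :: "'a set \<Rightarrow> 'a set set \<Rightarrow> bool" where
  "in_O' V E \<longleftrightarrow> (\<exists>(R :: nat set) ER P. tree R ER \<and> card R \<ge> 2 \<and> nbr_partitions R ER P \<and>
      graph_iso V E (subdiv_V R ER P) (subdiv_E R ER P))"

end

theory Submission
  imports Defs
begin

text \<open>In \<open>R(P)\<close> the weak support vertices are exactly the original vertices \<open>v\<close>, each
  carrying the single leaf \<open>(v, 1)\<close>. They are pairwise at distance at least 3, and a 2-packing
  contains at most one of the vertices \<open>v\<close>, \<open>(v, 1)\<close>, \<open>(v, A)\<close> for each \<open>v\<close>, so they form
  a maximum 2-packing; this property is invariant under isomorphism.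

  Conversely, let the set \<open>W\<close> of weak support vertices of \<open>T\<close> be a maximum 2-packing. Their
  leaves form another 2-packing of the same size, so maximality forces every vertex outside
  \<open>W\<close> to be adjacent to exactly one vertex of \<open>W\<close> (its owner), and every leaf to hang at
  a vertex of \<open>W\<close>. Join two vertices of \<open>W\<close> whenever an edge of \<open>T\<close> links two vertices they own:
  lifting a cycle of this graph produces a cycle of \<open>T\<close>, so it is a tree \<open>R\<close>. For every
  remaining vertex \<open>x\<close>, the owners of its neighbours other than its own owner form a block; since
  \<open>T\<close> has no cycles of length 3, 4 or 6, the blocks of the vertices with owner \<open>v\<close> partition
  the neighbourhood of \<open>v\<close> in \<open>R\<close>, and \<open>T\<close> is isomorphic to \<open>R(P)\<close>. The bound on the order
  is only needed to exclude \<open>T = K\<^sub>2\<close>, where both vertices are leaves.\<close>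

section \<open>Walks, distance and cycles\<close>

lemma walk_singleton [simp]: "walk V E [x] \<longleftrightarrow> x \<in> V"
  unfolding walk_def by auto

lemma walk_Cons_Cons [simp]:
  "walk V E (x # y # xs) \<longleftrightarrow> x \<in> V \<and> {x, y} \<in> E \<and> walk V E (y # xs)"
proof -
  have "(\<forall>i. Suc i < length (x # y # xs) \<longrightarrow> {(x # y # xs) ! i, (x # y # xs) ! Suc i} \<in> E) \<longleftrightarrow>
      {x, y} \<in> E \<and> (\<forall>i. Suc i < length (y # xs) \<longrightarrow> {(y # xs) ! i, (y # xs) ! Suc i} \<in> E)"
    (is "?l \<longleftrightarrow> ?r")
  proof
    assume ?l
    then show ?r by (metis Suc_less_eq length_Cons nth_Cons_0 nth_Cons_Suc zero_less_Suc)
  next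
    assume ?r
    then show ?l by (metis Suc_less_eq length_Cons nth_Cons_0 nth_Cons_Suc not0_implies_Suc)
  qed
  then show ?thesis unfolding walk_def by auto
qed

lemma walk_append_iff:
  assumes "xs \<noteq> []" "ys \<noteq> []"
  shows "walk V E (xs @ ys) \<longleftrightarrow> walk V E xs \<and> walk V E ys \<and> {last xs, hd ys} \<in> E"
  using assms
proof (induction xs)
  case (Cons a xs)
  then show ?case by (cases xs; cases ys) auto
qed simp

lemma walk_concat:
  assumes "segs \<noteq> []" "\<forall>s\<in>set segs. s \<noteq> [] \<and> walk V E s"
    "\<forall>i. Suc i < length segs \<longrightarrow> {last (segs ! i), hd (segs ! Suc i)} \<in> E"
  shows "walk V E (concat segs)"
  using assms
proof (induction segs)
  case (Cons s segs)
  show ?case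
  proof (cases segs)
    case (Cons t segs')
    have "walk V E (concat segs)"
      using Cons.IH Cons.prems \<open>segs = t # segs'\<close> by force
    moreover have "{last s, hd t} \<in> E"
      using Cons.prems(3)[rule_format, of 0] \<open>segs = t # segs'\<close> by simp
    moreover have "concat segs \<noteq> []" "hd (concat segs) = hd t"
      using Cons.prems \<open>segs = t # segs'\<close> by auto
    ultimately show ?thesis using walk_append_iff[of s "concat segs"] Cons.prems by auto
  qed (use Cons.prems in simp)
qed simp

lemma walk_of_stuttering_walk:
  assumes "xs \<noteq> []" "set xs \<subseteq> V"
    "\<forall>i. Suc i < length xs \<longrightarrow> xs ! i = xs ! Suc i \<or> {xs ! i, xs ! Suc i} \<in> E"
  shows "\<exists>ys. walk V E ys \<and> hd ys = hd xs \<and> last ys = last xs"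
  using assms
proof (induction xs)
  case (Cons a xs)
  show ?case
  proof (cases xs)
    case Nil
    then show ?thesis using Cons.prems by (intro exI[of _ "[a]"]) auto
  next
    case (Cons b xs')
    obtain ys where ys: "walk V E ys" "hd ys = b" "last ys = last xs"
      using Cons.IH Cons.prems \<open>xs = b # xs'\<close> by force
    have "a = b \<or> {a, b} \<in> E" using Cons.prems(3)[rule_format, of 0] \<open>xs = b # xs'\<close> by simp
    moreover have "ys \<noteq> []" using ys(1) unfolding walk_def by auto
    ultimately show ?thesis
      using ys Cons.prems \<open>xs = b # xs'\<close>
      by (cases "a = b"; cases ys) (auto intro: exI[of _ ys] exI[of _ "a # ys"])
  qed
qed simp

definition within_two :: "'a set \<Rightarrow> 'a set set \<Rightarrow> 'a \<Rightarrow> 'a \<Rightarrow> bool" where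
  "within_two V E u v \<longleftrightarrow> u \<in> V \<and> v \<in> V \<and>
     (u = v \<or> {u, v} \<in> E \<or> (\<exists>w\<in>V. {u, w} \<in> E \<and> {w, v} \<in> E))"

lemma within_two_sym: "within_two V E u v \<Longrightarrow> within_two V E v u"
  unfolding within_two_def by (auto simp: insert_commute)

lemma within_two_if_short_walk:
  assumes "walk V E xs" "length xs \<le> 3"
  shows "within_two V E (hd xs) (last xs)"
proof -
  have "xs \<noteq> []" using assms unfolding walk_def by auto
  then consider x where "xs = [x]" | x y where "xs = [x, y]" | x y z where "xs = [x, y, z]"
    using assms(2) by (cases xs; cases "tl xs"; cases "tl (tl xs)"; auto)
  then show ?thesis using assms(1) unfolding within_two_def by cases auto
qed

lemma gdist_ge_3_iff: "3 \<le> gdist V E u v \<longleftrightarrow> \<not> within_two V E u v"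
proof
  assume far: "3 \<le> gdist V E u v"
  have long: "4 \<le> length xs" if "walk V E xs" "hd xs = u" "last xs = v" for xs
  proof -
    have "3 \<le> enat (length xs - 1)" using far that unfolding gdist_def by (auto simp: le_INF_iff)
    then show ?thesis by (simp add: numeral_eq_enat)
  qed
  show "\<not> within_two V E u v"
    unfolding within_two_def using long[of "[u]"] long[of "[u, v]"] long[of "[u, _, v]"] by auto
next
  assume not_close: "\<not> within_two V E u v"
  have "3 \<le> enat (length xs - 1)" if "walk V E xs" "hd xs = u" "last xs = v" for xs
  proof -
    have "\<not> length xs \<le> 3" using within_two_if_short_walk[OF that(1)] that not_close by blast
    then show ?thesis by (simp add: numeral_eq_enat)
  qed
  then show "3 \<le> gdist V E u v"
    unfolding gdist_def by (intro INF_greatest) auto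
qed

lemma two_packing_iff:
  "two_packing V E S \<longleftrightarrow> S \<subseteq> V \<and> (\<forall>u\<in>S. \<forall>v\<in>S. u \<noteq> v \<longrightarrow> \<not> within_two V E u v)"
  unfolding two_packing_def gdist_ge_3_iff by simp

lemma graph_edgeD:
  assumes "graph V E" "{u, v} \<in> E"
  shows "u \<in> V" "v \<in> V" "u \<noteq> v"
  using assms unfolding graph_def by (auto simp: doubleton_eq_iff)

lemma leaf_neighbor_unique:
  assumes "leaf V E l" "u \<in> V" "w \<in> V" "{l, u} \<in> E" "{l, w} \<in> E"
  shows "u = w"
proof -
  have "card (neighbors V E l) = 1" using assms(1) unfolding leaf_def degree_def by simp
  moreover have "u \<in> neighbors V E l" "w \<in> neighbors V E l" using assms unfolding neighbors_def by auto
  ultimately show ?thesis by (metis card_1_singletonE singletonD)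
qed

lemma non_leaf_other_neighbor:
  assumes "x \<in> V" "y \<in> V" "{x, y} \<in> E" "\<not> leaf V E x"
  obtains z where "z \<in> V" "{x, z} \<in> E" "z \<noteq> y"
proof -
  have "neighbors V E x \<noteq> {y}" using assms unfolding leaf_def degree_def by auto
  moreover have "y \<in> neighbors V E x" using assms unfolding neighbors_def by simp
  ultimately show ?thesis using that unfolding neighbors_def by blast
qed

lemma walk_stays_in_closed_set:
  assumes "walk V E xs" "hd xs \<in> S" "\<And>u w. u \<in> S \<Longrightarrow> {u, w} \<in> E \<Longrightarrow> w \<in> S"
  shows "set xs \<subseteq> S"
  using assms(1,2)
proof (induction xs)
  case (Cons x xs)
  then show ?case using assms(3) by (cases xs) auto
qed simp

lemma connected_adjacent_leaves:
  assumes "graph V E" "connected_graph V E" "leaf V E a" "leaf V E b" "{a, b} \<in> E"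
  shows "V \<subseteq> {a, b}"
proof
  fix v assume "v \<in> V"
  moreover have aV: "a \<in> V" using assms(3) unfolding leaf_def by simp
  ultimately obtain xs where xs: "walk V E xs" "hd xs = a" "last xs = v"
    using assms(2) unfolding connected_graph_def by blast
  have "w \<in> {a, b}" if u: "u \<in> {a, b}" and uw: "{u, w} \<in> E" for u w
  proof -
    have "w \<in> V" "b \<in> V" using graph_edgeD[OF assms(1)] uw assms(5) by auto
    moreover have "{b, a} \<in> E" using assms(5) by (simp add: insert_commute)
    moreover consider "u = a" | "u = b" using u by blast
    ultimately show ?thesis
      using uw leaf_neighbor_unique[OF assms(3), of w b] leaf_neighbor_unique[OF assms(4), of w a]
        aV assms(5) by cases auto
  qed
  then have "set xs \<subseteq> {a, b}" using walk_stays_in_closed_set[OF xs(1), of "{a, b}"] xs(2) by blast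
  moreover have "xs \<noteq> []" using xs(1) unfolding walk_def by simp
  ultimately show "v \<in> {a, b}" using xs(3) last_in_set by blast
qed

lemma tree_no_cycle:
  assumes "tree V E" "walk V E xs" "distinct xs" "length xs \<ge> 3" "{last xs, hd xs} \<in> E"
  shows False
  using assms unfolding tree_def has_cycle_def by blast

lemma tree_no_triangle:
  assumes "tree V E" "{a, b} \<in> E" "{b, c} \<in> E" "{c, a} \<in> E" "a \<noteq> c"
  shows False
proof -
  have "graph V E" using assms(1) unfolding tree_def by simp
  then have "a \<in> V" "b \<in> V" "c \<in> V" "a \<noteq> b" "b \<noteq> c"
    using graph_edgeD[OF _ assms(2)] graph_edgeD[OF _ assms(3)] by simp_all
  then show False using tree_no_cycle[OF assms(1), of "[a, b, c]"] assms(2-5) by simp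
qed

lemma cycle_edge:
  assumes "walk V E c" "{last c, hd c} \<in> E" "i < length c"
  shows "{c ! i, c ! (Suc i mod length c)} \<in> E"
proof (cases "Suc i = length c")
  case True
  moreover have "c \<noteq> []" using assms(3) by auto
  ultimately have "last c = c ! i" "hd c = c ! 0"
    by (simp_all add: last_conv_nth hd_conv_nth flip: True)
  then show ?thesis using True assms(2) by simp
next
  case False
  then show ?thesis using assms unfolding walk_def by simp
qed

lemma has_cycle_of_segments:
  assumes "k \<ge> 3"
    and segs: "\<And>i. i < k \<Longrightarrow> seg i \<noteq> [] \<and> walk V E (seg i) \<and> distinct (seg i)"
    and disjoint: "\<And>i j. i < k \<Longrightarrow> j < k \<Longrightarrow> i \<noteq> j \<Longrightarrow> set (seg i) \<inter> set (seg j) = {}"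
    and link: "\<And>i. i < k \<Longrightarrow> {last (seg i), hd (seg (Suc i mod k))} \<in> E"
  shows "has_cycle V E"
proof -
  define L where "L = concat (map seg [0..<k])"
  have "{last (seg i), hd (seg (Suc i))} \<in> E" if "Suc i < k" for i
    using link[of i] that by simp
  then have "walk V E L"
    unfolding L_def using assms(1) segs by (intro walk_concat) auto
  moreover have "inj_on seg {0..<k}"
    using segs disjoint by (intro inj_onI) (metis Int_absorb atLeastLessThan_iff set_empty)
  then have "distinct (map seg [0..<k])" by (simp add: distinct_map)
  then have "distinct L"
    unfolding L_def using segs disjoint by (intro distinct_concat) (auto, metis IntI empty_iff)
  moreover have "length L \<ge> 3"
  proof -
    have "k \<le> (\<Sum>i\<leftarrow>[0..<k]. length (seg i))"
      using sum_list_mono[of "[0..<k]" "\<lambda>_. 1" "\<lambda>i. length (seg i)"] segs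
      by (simp add: sum_list_triv Suc_le_eq length_greater_0_conv)
    then show ?thesis using assms(1) unfolding L_def by (simp add: length_concat comp_def)
  qed
  moreover have "{last L, hd L} \<in> E"
  proof -
    have "[0..<k] = 0 # [1..<k - 1] @ [k - 1]"
      using assms(1) by (simp add: upt_conv_Cons upt_Suc_append[symmetric])
    then have "L = seg 0 @ concat (map seg [1..<k - 1]) @ seg (k - 1)"
      unfolding L_def by simp
    moreover have "seg 0 \<noteq> []" "seg (k - 1) \<noteq> []" using segs assms(1) by auto
    ultimately have "last L = last (seg (k - 1))" "hd L = hd (seg 0)" by auto
    then show ?thesis using link[of "k - 1"] assms(1) by simp
  qed
  ultimately show ?thesis unfolding has_cycle_def by blast
qed

section \<open>Invariance under isomorphism\<close>

locale graph_iso_map =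
  fixes V :: "'a set" and E :: "'a set set" and V' :: "'b set" and E' :: "'b set set"
    and f :: "'a \<Rightarrow> 'b"
  assumes bij: "bij_betw f V V'"
    and edge_iff: "\<And>u v. u \<in> V \<Longrightarrow> v \<in> V \<Longrightarrow> {f u, f v} \<in> E' \<longleftrightarrow> {u, v} \<in> E"
begin

lemma inj: "inj_on f V"
  using bij by (simp add: bij_betw_def)

lemma image_eq: "f ` V = V'"
  using bij by (simp add: bij_betw_def)

lemma neighbors_image: "v \<in> V \<Longrightarrow> neighbors V' E' (f v) = f ` neighbors V E v"
  unfolding neighbors_def using image_eq edge_iff by auto

lemma leaf_image_iff: "v \<in> V \<Longrightarrow> leaf V' E' (f v) \<longleftrightarrow> leaf V E v"
proof -
  assume v: "v \<in> V"
  have "card (f ` neighbors V E v) = card (neighbors V E v)"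
    by (rule card_image, rule inj_on_subset[OF inj]) (auto simp: neighbors_def)
  then show ?thesis using v image_eq unfolding leaf_def degree_def neighbors_image[OF v] by auto
qed

lemma weak_supports_image: "weak_supports V' E' = f ` weak_supports V E"
proof -
  have leaves: "{u \<in> neighbors V' E' (f v). leaf V' E' u} = f ` {u \<in> neighbors V E v. leaf V E u}"
    if v: "v \<in> V" for v
    using leaf_image_iff neighbors_image[OF v] by (auto simp: neighbors_def)
  have "card (f ` {u \<in> neighbors V E v. leaf V E u}) = card {u \<in> neighbors V E v. leaf V E u}"
    for v by (rule card_image, rule inj_on_subset[OF inj]) (auto simp: neighbors_def)
  then have "f v \<in> weak_supports V' E' \<longleftrightarrow> v \<in> weak_supports V E" if "v \<in> V" for v
    using that leaves image_eq unfolding weak_supports_def by auto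
  moreover have "weak_supports V' E' \<subseteq> f ` V" "weak_supports V E \<subseteq> V"
    using image_eq unfolding weak_supports_def by auto
  ultimately show ?thesis by blast
qed

lemma within_two_image_iff:
  assumes "u \<in> V" "v \<in> V"
  shows "within_two V' E' (f u) (f v) \<longleftrightarrow> within_two V E u v"
proof -
  have "(\<exists>w'\<in>V'. {f u, w'} \<in> E' \<and> {w', f v} \<in> E') \<longleftrightarrow>
      (\<exists>w\<in>V. {f u, f w} \<in> E' \<and> {f w, f v} \<in> E')"
    unfolding image_eq[symmetric] by blast
  also have "\<dots> \<longleftrightarrow> (\<exists>w\<in>V. {u, w} \<in> E \<and> {w, v} \<in> E)"
    using assms edge_iff by auto
  finally have "(\<exists>w'\<in>V'. {f u, w'} \<in> E' \<and> {w', f v} \<in> E') \<longleftrightarrow>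
      (\<exists>w\<in>V. {u, w} \<in> E \<and> {w, v} \<in> E)" .
  moreover have "f u = f v \<longleftrightarrow> u = v" using assms inj by (auto dest: inj_onD)
  moreover have "f u \<in> V'" "f v \<in> V'" using assms image_eq by auto
  ultimately show ?thesis unfolding within_two_def using assms edge_iff by simp
qed

lemma two_packing_image_iff:
  assumes "S \<subseteq> V"
  shows "two_packing V' E' (f ` S) \<longleftrightarrow> two_packing V E S"
proof -
  have "(\<forall>x\<in>f ` S. \<forall>y\<in>f ` S. x \<noteq> y \<longrightarrow> \<not> within_two V' E' x y) \<longleftrightarrow>
      (\<forall>u\<in>S. \<forall>v\<in>S. f u \<noteq> f v \<longrightarrow> \<not> within_two V' E' (f u) (f v))"
    by blast
  also have "\<dots> \<longleftrightarrow> (\<forall>u\<in>S. \<forall>v\<in>S. u \<noteq> v \<longrightarrow> \<not> within_two V E u v)"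
  proof (intro ball_cong refl)
    fix u v assume "u \<in> S" "v \<in> S"
    then have "u \<in> V" "v \<in> V" using assms by auto
    then show "(f u \<noteq> f v \<longrightarrow> \<not> within_two V' E' (f u) (f v)) \<longleftrightarrow>
        (u \<noteq> v \<longrightarrow> \<not> within_two V E u v)"
      using inj within_two_image_iff by (auto dest: inj_onD)
  qed
  finally show ?thesis
    unfolding two_packing_iff using assms image_eq by blast
qed

lemma two_packing_iff_image:
  "two_packing V' E' T \<longleftrightarrow> (\<exists>T0. T0 \<subseteq> V \<and> T = f ` T0 \<and> two_packing V E T0)"
proof
  assume T: "two_packing V' E' T"
  then have "T \<subseteq> V'" unfolding two_packing_def by simp
  then have "T = f ` (inv_into V f ` T)" "inv_into V f ` T \<subseteq> V"
    using image_eq by (auto simp: image_inv_into_cancel inv_into_into)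
  then show "\<exists>T0. T0 \<subseteq> V \<and> T = f ` T0 \<and> two_packing V E T0"
    using T two_packing_image_iff by metis
qed (use two_packing_image_iff in blast)

lemma max_two_packing_image_iff:
  assumes "S \<subseteq> V"
  shows "max_two_packing V' E' (f ` S) \<longleftrightarrow> max_two_packing V E S"
proof -
  have card_eq: "card (f ` T) = card T" if "T \<subseteq> V" for T
    using card_image inj_on_subset[OF inj that] by blast
  have "(\<forall>T. two_packing V' E' T \<longrightarrow> card T \<le> card (f ` S)) \<longleftrightarrow>
      (\<forall>T0. two_packing V E T0 \<longrightarrow> card T0 \<le> card S)"
    unfolding two_packing_iff_image using card_eq assms
    by (metis (no_types, lifting) two_packing_def)
  then show ?thesis unfolding max_two_packing_def using two_packing_image_iff[OF assms] by simp
qed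

end

section \<open>Weak support vertices of a 2-subdivision\<close>

lemma subdiv_E_simps:
  "{Orig a, Orig b} \<notin> subdiv_E R ER P"
  "{One a, One b} \<notin> subdiv_E R ER P"
  "{One a, Part b B} \<notin> subdiv_E R ER P"
  "{Part b B, One a} \<notin> subdiv_E R ER P"
  "{Orig a, One b} \<in> subdiv_E R ER P \<longleftrightarrow> a = b \<and> a \<in> R"
  "{One b, Orig a} \<in> subdiv_E R ER P \<longleftrightarrow> a = b \<and> a \<in> R"
  "{Orig a, Part b B} \<in> subdiv_E R ER P \<longleftrightarrow> a = b \<and> a \<in> R \<and> B \<in> P a"
  "{Part b B, Orig a} \<in> subdiv_E R ER P \<longleftrightarrow> a = b \<and> a \<in> R \<and> B \<in> P a"
  unfolding subdiv_E_def by (auto simp: doubleton_eq_iff)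

lemma subdiv_E_Part_Part:
  "{Part a A, Part b B} \<in> subdiv_E R ER P \<longleftrightarrow>
    {a, b} \<in> ER \<and> A \<in> P a \<and> B \<in> P b \<and> b \<in> A \<and> a \<in> B"
proof
  assume "{Part a A, Part b B} \<in> subdiv_E R ER P"
  then obtain u v A' B' where uv: "{Part a A, Part b B} = {Part u A', Part v B'}"
    "{u, v} \<in> ER" "A' \<in> P u" "B' \<in> P v" "v \<in> A'" "u \<in> B'"
    unfolding subdiv_E_def by (auto simp: doubleton_eq_iff)
  then consider "a = u" "A = A'" "b = v" "B = B'" | "a = v" "A = B'" "b = u" "B = A'"
    by (auto simp: doubleton_eq_iff)
  then show "{a, b} \<in> ER \<and> A \<in> P a \<and> B \<in> P b \<and> b \<in> A \<and> a \<in> B"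
    using uv by cases (auto simp: insert_commute)
qed (unfold subdiv_E_def, blast)

lemmas subdiv_E_iff = subdiv_E_simps subdiv_E_Part_Part

lemma subdiv_V_simps:
  "Orig a \<in> subdiv_V R ER P \<longleftrightarrow> a \<in> R"
  "One a \<in> subdiv_V R ER P \<longleftrightarrow> a \<in> R"
  "Part a A \<in> subdiv_V R ER P \<longleftrightarrow> a \<in> R \<and> A \<in> P a"
  unfolding subdiv_V_def by auto

fun origin :: "'a sv \<Rightarrow> 'a" where
  "origin (Orig v) = v"
| "origin (One v) = v"
| "origin (Part v A) = v"

locale subdivided_tree =
  fixes R :: "'b set" and ER :: "'b set set" and P :: "'b \<Rightarrow> 'b set set"
  assumes tree: "tree R ER" and card_ge_2: "card R \<ge> 2" and partitions: "nbr_partitions R ER P"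
begin

abbreviation "V' \<equiv> subdiv_V R ER P"
abbreviation "E' \<equiv> subdiv_E R ER P"

lemma graph: "graph R ER"
  using tree unfolding tree_def by simp

lemma partition: "v \<in> R \<Longrightarrow> partition_on (neighbors R ER v) (P v)"
  using partitions unfolding nbr_partitions_def by blast

lemma neighbor_exists:
  assumes v: "v \<in> R"
  obtains u where "{v, u} \<in> ER"
proof -
  have "\<not> R \<subseteq> {v}"
  proof
    assume "R \<subseteq> {v}"
    then have "card R \<le> 1" using card_mono[of "{v}" R] by simp
    then show False using card_ge_2 by simp
  qed
  then obtain w where w: "w \<in> R" "w \<noteq> v" by blast
  obtain xs where xs: "walk R ER xs" "hd xs = v" "last xs = w"
    using tree v w unfolding tree_def connected_graph_def by blast
  then obtain b ys where "xs = v # b # ys" using w unfolding walk_def by (cases xs; cases "tl xs") auto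
  then show ?thesis using xs that by auto
qed

lemma block_exists:
  assumes "v \<in> R"
  obtains A where "A \<in> P v"
proof -
  obtain u where u: "{v, u} \<in> ER" using neighbor_exists assms by blast
  then have "u \<in> neighbors R ER v" using graph_edgeD[OF graph u] unfolding neighbors_def by simp
  then show ?thesis using partition[OF assms] that unfolding partition_on_def by blast
qed

lemma block_edge:
  assumes "v \<in> R" "A \<in> P v" "u \<in> A"
  shows "{v, u} \<in> ER" "u \<in> R"
proof -
  have "u \<in> neighbors R ER v" using partition[OF assms(1)] assms unfolding partition_on_def by blast
  then show "{v, u} \<in> ER" "u \<in> R" unfolding neighbors_def by auto
qed

lemma block_back:
  assumes "v \<in> R" "A \<in> P v" "u \<in> A"
  obtains B where "B \<in> P u" "v \<in> B"
proof -
  have "{u, v} \<in> ER" using block_edge[OF assms] by (simp add: insert_commute)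
  then have "v \<in> neighbors R ER u" using graph_edgeD[OF graph] unfolding neighbors_def by auto
  then show ?thesis using partition[OF block_edge(2)[OF assms]] that unfolding partition_on_def by blast
qed

lemma block_nonempty:
  assumes "v \<in> R" "A \<in> P v"
  obtains u where "u \<in> A"
  using partition[OF assms(1)] assms(2) unfolding partition_on_def by (metis all_not_in_conv)



lemma card_neighbors_ne_1:
  "x \<in> neighbors V' E' v \<Longrightarrow> y \<in> neighbors V' E' v \<Longrightarrow> x \<noteq> y \<Longrightarrow> \<not> leaf V' E' v"
  unfolding leaf_def degree_def by (metis card_1_singletonE singletonD)

lemma neighbors_One: "a \<in> R \<Longrightarrow> neighbors V' E' (One a) = {Orig a}"
  by (rule set_eqI, case_tac x) (auto simp: neighbors_def subdiv_E_iff subdiv_V_simps)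

lemma leaf_One: "a \<in> R \<Longrightarrow> leaf V' E' (One a)"
  unfolding leaf_def degree_def by (simp add: neighbors_One subdiv_V_simps)

lemma not_leaf_Orig:
  assumes "a \<in> R"
  shows "\<not> leaf V' E' (Orig a)"
proof -
  obtain A where A: "A \<in> P a" using block_exists assms by blast
  have "One a \<in> neighbors V' E' (Orig a)" "Part a A \<in> neighbors V' E' (Orig a)"
    using assms A by (auto simp: neighbors_def subdiv_E_iff subdiv_V_simps)
  then show ?thesis by (rule card_neighbors_ne_1) simp
qed

lemma not_leaf_Part:
  assumes "a \<in> R" "A \<in> P a"
  shows "\<not> leaf V' E' (Part a A)"
proof -
  obtain b where b: "b \<in> A" using block_nonempty assms by blast
  obtain B where B: "B \<in> P b" "a \<in> B" using block_back[OF assms b] by blast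
  have "{a, b} \<in> ER" "b \<in> R" using block_edge[OF assms b] by auto
  then have "Orig a \<in> neighbors V' E' (Part a A)" "Part b B \<in> neighbors V' E' (Part a A)"
    using assms b B by (auto simp: neighbors_def subdiv_E_iff subdiv_V_simps)
  then show ?thesis by (rule card_neighbors_ne_1) simp
qed

lemma leaves_subdiv: "leaf V' E' x \<longleftrightarrow> x \<in> One ` R"
proof (cases x)
  case (Orig a)
  then show ?thesis using not_leaf_Orig by (auto simp: leaf_def subdiv_V_simps)
next
  case (One a)
  show ?thesis
  proof (cases "a \<in> R")
    case False
    then show ?thesis using One by (auto simp: leaf_def subdiv_V_simps)
  qed (use One leaf_One in auto)
next
  case (Part a A)
  then show ?thesis using not_leaf_Part by (auto simp: leaf_def subdiv_V_simps)
qed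

lemma weak_supports_subdiv: "weak_supports V' E' = Orig ` R"
proof (rule set_eqI)
  fix x
  have leaf_nbrs_Orig: "{u \<in> neighbors V' E' (Orig a). leaf V' E' u} = {One a}" if "a \<in> R" for a
  proof (rule set_eqI)
    fix y show "y \<in> {u \<in> neighbors V' E' (Orig a). leaf V' E' u} \<longleftrightarrow> y \<in> {One a}"
      using that by (cases y) (auto simp: leaves_subdiv neighbors_def subdiv_E_iff subdiv_V_simps)
  qed
  have no_leaf_nbrs: "{u \<in> neighbors V' E' x. leaf V' E' u} = {}" if "x \<notin> Orig ` R"
  proof -
    have "\<not> leaf V' E' y" if "y \<in> neighbors V' E' x" for y
    proof
      assume "leaf V' E' y"
      then obtain b where "y = One b" "b \<in> R" unfolding leaves_subdiv by blast
      then show False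
        using \<open>y \<in> neighbors V' E' x\<close> \<open>x \<notin> Orig ` R\<close>
        by (cases x) (auto simp: neighbors_def subdiv_E_iff)
    qed
    then show ?thesis by blast
  qed
  show "x \<in> weak_supports V' E' \<longleftrightarrow> x \<in> Orig ` R"
  proof (cases "x \<in> Orig ` R")
    case True
    then show ?thesis using leaf_nbrs_Orig unfolding weak_supports_def by (auto simp: subdiv_V_simps)
  next
    case False
    then show ?thesis unfolding weak_supports_def by (simp add: no_leaf_nbrs)
  qed
qed

lemma not_within_two_Orig:
  assumes "a \<in> R" "b \<in> R" "a \<noteq> b"
  shows "\<not> within_two V' E' (Orig a) (Orig b)"
proof
  assume "within_two V' E' (Orig a) (Orig b)"
  then obtain w where "{Orig a, w} \<in> E'" "{w, Orig b} \<in> E'"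
    using assms unfolding within_two_def by (auto simp: subdiv_E_iff)
  then show False using assms by (cases w) (auto simp: subdiv_E_iff)
qed

lemma within_two_same_origin:
  assumes "x \<in> V'" "y \<in> V'" "origin x = origin y"
  shows "within_two V' E' x y"
proof -
  let ?a = "origin x"
  have "?a \<in> R" using assms(1) by (cases x) (auto simp: subdiv_V_simps)
  then have "Orig ?a \<in> V'" by (simp add: subdiv_V_simps)
  moreover have "x = Orig ?a \<or> {x, Orig ?a} \<in> E'" "y = Orig ?a \<or> {Orig ?a, y} \<in> E'"
    using assms by (cases x; cases y; auto simp: subdiv_V_simps subdiv_E_iff)+
  ultimately show ?thesis using assms(1,2) unfolding within_two_def by (auto simp: insert_commute)
qed

lemma two_packing_card_le:
  assumes "two_packing V' E' S"
  shows "card S \<le> card R"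
proof -
  have S: "S \<subseteq> V'" "\<And>x y. x \<in> S \<Longrightarrow> y \<in> S \<Longrightarrow> x \<noteq> y \<Longrightarrow> \<not> within_two V' E' x y"
    using assms unfolding two_packing_iff by auto
  then have "inj_on origin S" using within_two_same_origin by (meson inj_onI subsetD)
  moreover have "origin ` S \<subseteq> R"
    using S(1) by (auto simp: subdiv_V_def)
  moreover have "finite R" using graph unfolding graph_def by simp
  ultimately show ?thesis using card_inj_on_le by blast
qed

lemma max_two_packing_weak_supports: "max_two_packing V' E' (weak_supports V' E')"
proof -
  have "two_packing V' E' (Orig ` R)"
    unfolding two_packing_iff using not_within_two_Orig by (auto simp: subdiv_V_simps)
  moreover have "card (Orig ` R) = card R" by (rule card_image) (simp add: inj_on_def)
  ultimately show ?thesis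
    unfolding max_two_packing_def weak_supports_subdiv using two_packing_card_le by simp
qed

end

lemma max_two_packing_weak_supports_if_in_O':
  assumes "in_O' V E"
  shows "max_two_packing V E (weak_supports V E)"
proof -
  obtain R :: "nat set" and ER P where RP: "tree R ER" "card R \<ge> 2" "nbr_partitions R ER P"
    and iso: "graph_iso V E (subdiv_V R ER P) (subdiv_E R ER P)"
    using assms unfolding in_O'_def by blast
  interpret subdivided_tree R ER P using RP by unfold_locales
  obtain f where "bij_betw f V V'" "\<forall>u\<in>V. \<forall>v\<in>V. {u, v} \<in> E \<longleftrightarrow> {f u, f v} \<in> E'"
    using iso unfolding graph_iso_def by blast
  then interpret graph_iso_map V E V' E' f by unfold_locales auto
  have "weak_supports V E \<subseteq> V" unfolding weak_supports_def by auto
  then show ?thesis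
    using max_two_packing_weak_supports max_two_packing_image_iff weak_supports_image by simp
qed

section \<open>Trees whose weak support vertices form a maximum 2-packing\<close>

locale weak_supports_max_packing =
  fixes V :: "'a set" and E :: "'a set set"
  assumes tree: "tree V E" and card_ge_6: "card V \<ge> 6"
    and max_packing: "max_two_packing V E (weak_supports V E)"
begin

abbreviation "W \<equiv> weak_supports V E"

lemma graph: "graph V E"
  using tree unfolding tree_def by simp

lemma finite_V: "finite V"
  using graph unfolding graph_def by simp

lemma edgeD: "{u, v} \<in> E \<Longrightarrow> u \<in> V" "{u, v} \<in> E \<Longrightarrow> v \<in> V" "{u, v} \<in> E \<Longrightarrow> u \<noteq> v"
  using graph_edgeD[OF graph] by auto

lemma edge_sym: "{u, v} \<in> E \<Longrightarrow> {v, u} \<in> E"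
  by (simp add: insert_commute)

lemma W_subset: "W \<subseteq> V"
  unfolding weak_supports_def by auto

lemma finite_W: "finite W"
  using W_subset finite_V finite_subset by blast

lemma W_far: "s \<in> W \<Longrightarrow> t \<in> W \<Longrightarrow> s \<noteq> t \<Longrightarrow> \<not> within_two V E s t"
  using max_packing unfolding max_two_packing_def two_packing_iff by blast

lemma W_not_adjacent: "s \<in> W \<Longrightarrow> t \<in> W \<Longrightarrow> {s, t} \<notin> E"
  using W_far edgeD unfolding within_two_def by blast

lemma W_no_common_neighbor: "s \<in> W \<Longrightarrow> t \<in> W \<Longrightarrow> {s, w} \<in> E \<Longrightarrow> {w, t} \<in> E \<Longrightarrow> s = t"
  using W_far edgeD unfolding within_two_def by blast

lemma leaf_neighbor_eq: "leaf V E l \<Longrightarrow> {l, u} \<in> E \<Longrightarrow> {l, w} \<in> E \<Longrightarrow> u = w"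
  using leaf_neighbor_unique edgeD by metis

lemma no_adjacent_leaves: "leaf V E a \<Longrightarrow> leaf V E b \<Longrightarrow> {a, b} \<notin> E"
proof
  assume "leaf V E a" "leaf V E b" "{a, b} \<in> E"
  moreover have "connected_graph V E" using tree unfolding tree_def by simp
  ultimately have "V \<subseteq> {a, b}" using connected_adjacent_leaves[OF graph] by blast
  moreover have "card {a, b} \<le> 2" by (cases "a = b") simp_all
  ultimately have "card V \<le> 2" using card_mono[of "{a, b}" V] by simp
  then show False using card_ge_6 by simp
qed

definition pendant :: "'a \<Rightarrow> 'a" where
  "pendant s = the_elem {u \<in> neighbors V E s. leaf V E u}"

lemma leaf_neighbors_W:
  assumes "s \<in> W"
  shows "{u \<in> neighbors V E s. leaf V E u} = {pendant s}"
proof -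
  have "card {u \<in> neighbors V E s. leaf V E u} = 1" using assms unfolding weak_supports_def by simp
  then obtain z where "{u \<in> neighbors V E s. leaf V E u} = {z}" by (rule card_1_singletonE)
  then show ?thesis unfolding pendant_def by simp
qed

lemma pendant: "s \<in> W \<Longrightarrow> pendant s \<in> V" "s \<in> W \<Longrightarrow> {s, pendant s} \<in> E"
  "s \<in> W \<Longrightarrow> leaf V E (pendant s)"
  using leaf_neighbors_W unfolding neighbors_def by auto

lemma pendant_eqI: "s \<in> W \<Longrightarrow> {s, u} \<in> E \<Longrightarrow> leaf V E u \<Longrightarrow> u = pendant s"
  using leaf_neighbors_W edgeD unfolding neighbors_def by blast

lemma pendant_neighbor: "s \<in> W \<Longrightarrow> {pendant s, w} \<in> E \<Longrightarrow> w = s"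
  using leaf_neighbor_eq pendant edge_sym by metis

lemma inj_on_pendant: "inj_on pendant W"
  by (rule inj_onI) (metis pendant(2) pendant_neighbor edge_sym)

lemma pendant_notin_W: "s \<in> W \<Longrightarrow> pendant s \<notin> W"
  using W_not_adjacent pendant(2) by blast

lemma pendants_far:
  assumes "s \<in> W" "t \<in> W" "s \<noteq> t"
  shows "\<not> within_two V E (pendant s) (pendant t)"
proof
  assume "within_two V E (pendant s) (pendant t)"
  then consider "pendant s = pendant t" | "{pendant s, pendant t} \<in> E"
    | w where "{pendant s, w} \<in> E" "{w, pendant t} \<in> E"
    unfolding within_two_def by blast
  then show False
  proof cases
    case 1
    then show False using inj_on_pendant assms by (auto dest: inj_onD)
  next
    case 2
    then show False using pendant_neighbor pendant_notin_W assms by metis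
  next
    case 3
    then show False using pendant_neighbor edge_sym assms by metis
  qed
qed

text \<open>Maximality of \<open>W\<close> is used through the packing \<open>pendant ` W\<close> of the same size.\<close>

lemma within_two_some_pendant:
  assumes "w \<in> V" "w \<notin> pendant ` W"
  shows "\<exists>s\<in>W. within_two V E w (pendant s)"
proof (rule ccontr)
  assume "\<not> ?thesis"
  then have far: "\<not> within_two V E w (pendant s)" if "s \<in> W" for s
    using that by blast
  let ?S = "insert w (pendant ` W)"
  have "two_packing V E ?S"
    unfolding two_packing_iff using assms(1) pendant(1) far pendants_far within_two_sym by fast
  then have "card ?S \<le> card W" using max_packing unfolding max_two_packing_def by blast
  moreover have "card ?S = Suc (card W)"
    using assms(2) finite_W card_image[OF inj_on_pendant] by simp
  ultimately show False by simp
qed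

lemma adjacent_W:
  assumes "w \<in> V" "w \<notin> W"
  shows "\<exists>s\<in>W. {w, s} \<in> E"
proof (rule ccontr)
  assume no: "\<not> ?thesis"
  then have "w \<notin> pendant ` W" using pendant(2) edge_sym by blast
  then obtain s where s: "s \<in> W" "within_two V E w (pendant s)"
    using within_two_some_pendant assms(1) by blast
  then consider "w = pendant s" | "{w, pendant s} \<in> E" | z where "{w, z} \<in> E" "{z, pendant s} \<in> E"
    unfolding within_two_def by blast
  then show False
  proof cases
    case 1 then show False using \<open>w \<notin> pendant ` W\<close> s by blast
  next
    case 2 then show False using pendant_neighbor[OF s(1)] edge_sym assms(2) s(1) by metis
  next
    case 3 then show False using pendant_neighbor[OF s(1)] edge_sym no s(1) by metis
  qed
qed

lemma leaf_is_pendant: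
  assumes l: "leaf V E l"
  obtains s where "s \<in> W" "l = pendant s"
proof -
  have "card (neighbors V E l) = 1" using l unfolding leaf_def degree_def by simp
  then obtain u where u: "neighbors V E l = {u}" by (rule card_1_singletonE)
  then have lu: "{l, u} \<in> E" unfolding neighbors_def by auto
  show ?thesis
  proof (cases "u \<in> W")
    case True
    then show ?thesis using pendant_eqI edge_sym[OF lu] l that by blast
  next
    case False
    have not_pendant: "l \<noteq> pendant s" if "s \<in> W" for s
      using pendant_neighbor[OF that] lu False that by blast
    then obtain s where s: "s \<in> W" "within_two V E l (pendant s)"
      using within_two_some_pendant l unfolding leaf_def by blast
    then consider "{l, pendant s} \<in> E" | z where "{l, z} \<in> E" "{z, pendant s} \<in> E"
      using not_pendant unfolding within_two_def by blast
    then show ?thesis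
    proof cases
      case 1
      then have "l = s" "pendant s = u"
        using pendant_neighbor[OF s(1)] leaf_neighbor_eq[OF l _ lu] edge_sym by metis+
      then show ?thesis using no_adjacent_leaves l pendant(3)[OF s(1)] 1 by simp
    next
      case 2
      then show ?thesis using pendant_neighbor[OF s(1)] leaf_neighbor_eq[OF l _ lu] edge_sym False s(1)
        by metis
    qed
  qed
qed

lemma W_not_leaf: "s \<in> W \<Longrightarrow> \<not> leaf V E s"
  using no_adjacent_leaves pendant by blast


text \<open>The vertices that are neither weak supports nor their leaves become the vertices
  \<open>(v, A)\<close> of the subdivision; their owner plays the role of \<open>v\<close>.\<close>

definition inner :: "'a set" where
  "inner = V - W - pendant ` W"

definition owner :: "'a \<Rightarrow> 'a" where
  "owner x = (SOME s. s \<in> W \<and> {x, s} \<in> E)"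

lemma owner:
  assumes "x \<in> V" "x \<notin> W"
  shows "owner x \<in> W" "{x, owner x} \<in> E"
proof -
  have "\<exists>s. s \<in> W \<and> {x, s} \<in> E" using adjacent_W[OF assms] by blast
  then have "owner x \<in> W \<and> {x, owner x} \<in> E" unfolding owner_def by (rule someI_ex)
  then show "owner x \<in> W" "{x, owner x} \<in> E" by auto
qed

lemma owner_unique:
  assumes "x \<in> V" "x \<notin> W" "s \<in> W" "{x, s} \<in> E"
  shows "s = owner x"
  using W_no_common_neighbor[OF assms(3) owner(1)[OF assms(1,2)] edge_sym[OF assms(4)] owner(2)[OF assms(1,2)]] .

lemma owner_pendant: "s \<in> W \<Longrightarrow> owner (pendant s) = s"
  using owner_unique[OF pendant(1) pendant_notin_W _ edge_sym[OF pendant(2)]] by simp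

lemma inner_iff: "x \<in> inner \<longleftrightarrow> x \<in> V \<and> x \<notin> W \<and> x \<notin> pendant ` W"
  unfolding inner_def by blast

lemma inner_owner: "x \<in> inner \<Longrightarrow> owner x \<in> W" "x \<in> inner \<Longrightarrow> {x, owner x} \<in> E"
  using owner inner_iff by auto

lemma inner_not_leaf:
  assumes "x \<in> inner"
  shows "\<not> leaf V E x"
proof
  assume "leaf V E x"
  then obtain s where "s \<in> W" "x = pendant s" by (rule leaf_is_pendant)
  then show False using assms inner_iff by blast
qed

lemma inner_neighbor:
  assumes "x \<in> inner" "{x, y} \<in> E" "y \<noteq> owner x"
  shows "y \<in> inner"
proof -
  have x: "x \<in> V" "x \<notin> W" using assms(1) inner_iff by auto
  then have "y \<notin> W" using owner_unique assms(2,3) by blast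
  moreover have "y \<notin> pendant ` W"
  proof
    assume "y \<in> pendant ` W"
    then obtain t where "t \<in> W" "y = pendant t" by blast
    then show False using pendant_neighbor[of t x] edge_sym[OF assms(2)] x by auto
  qed
  ultimately show ?thesis using edgeD(2)[OF assms(2)] inner_iff by simp
qed

lemma inner_adjacent_owners_differ:
  assumes "x \<in> inner" "y \<in> inner" "{x, y} \<in> E"
  shows "owner x \<noteq> owner y"
proof
  assume "owner x = owner y"
  then have "{y, owner x} \<in> E" using inner_owner(2)[OF assms(2)] by simp
  moreover have "x \<noteq> owner x" using inner_owner(1)[OF assms(1)] assms(1) unfolding inner_iff by auto
  ultimately show False
    using tree_no_triangle[OF tree assms(3) _ edge_sym[OF inner_owner(2)[OF assms(1)]]] by simp
qed

lemma inner_other_neighbor: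
  assumes "x \<in> inner"
  obtains y where "y \<in> inner" "{x, y} \<in> E" "owner y \<noteq> owner x"
proof -
  have "x \<in> V" "owner x \<in> V" using edgeD inner_owner(2)[OF assms] by auto
  then obtain y where y: "y \<in> V" "{x, y} \<in> E" "y \<noteq> owner x"
    using inner_owner(2)[OF assms] inner_not_leaf[OF assms] by (rule non_leaf_other_neighbor)
  then have y_inner: "y \<in> inner" using inner_neighbor[OF assms] by blast
  then have "owner y \<noteq> owner x" using inner_adjacent_owners_differ[OF assms _ y(2)] by simp
  then show ?thesis using that y_inner y(2) by blast
qed

lemma W_neighbor_cases:
  assumes "s \<in> W" "{s, y} \<in> E"
  shows "y = pendant s \<or> (y \<in> inner \<and> owner y = s)"
proof (cases "y \<in> pendant ` W")
  case True
  then obtain t where t: "t \<in> W" "y = pendant t" by blast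
  then have "s = t" using pendant_neighbor[OF t(1)] edge_sym[OF assms(2)] by simp
  then show ?thesis using t by simp
next
  case False
  have y: "y \<in> V" "y \<notin> W" using edgeD assms W_not_adjacent by auto
  then have "s = owner y" using owner_unique assms edge_sym by blast
  then show ?thesis using False y inner_iff by simp
qed

lemma inner_if_adjacent_outside_W:
  assumes "u \<in> V" "u \<notin> W" "{u, v} \<in> E" "v \<notin> W"
  shows "u \<in> inner"
proof -
  have "u \<noteq> pendant t" if "t \<in> W" for t
    using pendant_neighbor[OF that, of v] assms(3,4) that by auto
  then show ?thesis using assms(1,2) inner_iff by blast
qed

definition support_adj :: "'a \<Rightarrow> 'a \<Rightarrow> bool" where
  "support_adj a b \<longleftrightarrow> (\<exists>x y. x \<in> inner \<and> y \<in> inner \<and> {x, y} \<in> E \<and> owner x = a \<and> owner y = b)"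

lemma support_adj_sym: "support_adj a b \<Longrightarrow> support_adj b a"
  unfolding support_adj_def using edge_sym by blast

lemma support_adjD: "support_adj a b \<Longrightarrow> a \<in> W" "support_adj a b \<Longrightarrow> b \<in> W"
  "support_adj a b \<Longrightarrow> a \<noteq> b"
  unfolding support_adj_def using inner_owner inner_adjacent_owners_differ by auto

definition block :: "'a \<Rightarrow> 'a set" where
  "block x = {t. \<exists>y\<in>inner. {x, y} \<in> E \<and> owner y = t}"

lemma block_subset_W: "block x \<subseteq> W"
  unfolding block_def using inner_owner by auto

lemma block_nonempty: "x \<in> inner \<Longrightarrow> block x \<noteq> {}"
  unfolding block_def by (metis (mono_tags, lifting) empty_iff inner_other_neighbor mem_Collect_eq)

lemma support_adj_block: "x \<in> inner \<Longrightarrow> t \<in> block x \<Longrightarrow> support_adj (owner x) t"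
  unfolding block_def support_adj_def by blast

lemma same_owner_no_common_neighbor:
  assumes "p \<in> inner" "q \<in> inner" "y \<in> inner" "owner p = owner q" "p \<noteq> q"
    "{p, y} \<in> E" "{q, y} \<in> E"
  shows False
proof -
  let ?a = "owner p"
  have "{?a, p} \<in> E" "{q, ?a} \<in> E"
    using edge_sym[OF inner_owner(2)[OF assms(1)]] inner_owner(2)[OF assms(2)] assms(4) by simp_all
  moreover have "?a \<notin> {p, q, y}" "p \<noteq> y" "q \<noteq> y"
    using assms inner_owner(1)[OF assms(1)] inner_iff edgeD(3) by auto
  moreover have "?a \<in> V" "p \<in> V" "q \<in> V" "y \<in> V" using assms inner_owner(1) inner_iff W_subset by auto
  ultimately show False
    using tree_no_cycle[OF tree, of "[?a, p, y, q]"] assms(5-7) edge_sym[OF assms(7)] by auto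
qed

lemma owners_linked_once:
  assumes "p \<in> inner" "q \<in> inner" "r \<in> inner" "s \<in> inner"
    "owner p = owner q" "owner r = owner s" "owner p \<noteq> owner r" "p \<noteq> q" "r \<noteq> s"
    "{p, r} \<in> E" "{q, s} \<in> E"
  shows False
proof -
  let ?a = "owner p" and ?b = "owner r"
  have "{r, ?b} \<in> E" "{?b, s} \<in> E" "{s, q} \<in> E" "{q, ?a} \<in> E" "{?a, p} \<in> E"
    using assms(5,6,11) inner_owner(2) assms(1-4) edge_sym by metis+
  moreover have "distinct [p, r, ?b, s, q, ?a]"
    using assms inner_owner(1) inner_iff by auto
  moreover have "?a \<in> V" "?b \<in> V" "p \<in> V" "q \<in> V" "r \<in> V" "s \<in> V"
    using assms(1-4) inner_owner(1) inner_iff W_subset by auto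
  ultimately show False using tree_no_cycle[OF tree, of "[p, r, ?b, s, q, ?a]"] assms(10) by simp
qed

lemma block_disjoint:
  assumes "x \<in> inner" "x' \<in> inner" "owner x = owner x'" "x \<noteq> x'"
  shows "block x \<inter> block x' = {}"
proof (rule equals0I)
  fix t assume "t \<in> block x \<inter> block x'"
  then obtain y y' where y: "y \<in> inner" "{x, y} \<in> E" "owner y = t"
    and y': "y' \<in> inner" "{x', y'} \<in> E" "owner y' = t"
    unfolding block_def by blast
  show False
  proof (cases "y = y'")
    case True
    then show False using same_owner_no_common_neighbor assms y y' by blast
  next
    case False
    have "owner x \<noteq> t" using inner_adjacent_owners_differ[OF assms(1) y(1,2)] y(3) by simp
    then show False using owners_linked_once[OF assms(1,2) y(1) y'(1)] assms y y' False by simp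
  qed
qed

lemma inner_edge_iff:
  assumes "u \<in> inner" "v \<in> inner"
  shows "{u, v} \<in> E \<longleftrightarrow> support_adj (owner u) (owner v) \<and> owner v \<in> block u \<and> owner u \<in> block v"
proof
  assume "{u, v} \<in> E"
  then show "support_adj (owner u) (owner v) \<and> owner v \<in> block u \<and> owner u \<in> block v"
    using assms edge_sym unfolding support_adj_def block_def by blast
next
  assume adj: "support_adj (owner u) (owner v) \<and> owner v \<in> block u \<and> owner u \<in> block v"
  then obtain y z where y: "y \<in> inner" "{u, y} \<in> E" "owner y = owner v"
    and z: "z \<in> inner" "{v, z} \<in> E" "owner z = owner u"
    unfolding block_def by blast
  have "owner u \<noteq> owner v" using support_adjD(3) adj by blast
  then have "y = v \<or> z = u"
    using owners_linked_once[OF assms(1) z(1) y(1) assms(2)] y z edge_sym by metis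
  then show "{u, v} \<in> E" using y(2) edge_sym[OF z(2)] by blast
qed

definition proj :: "'a \<Rightarrow> 'a" where
  "proj v = (if v \<in> W then v else owner v)"

lemma proj_in_W: "v \<in> V \<Longrightarrow> proj v \<in> W"
  unfolding proj_def using owner(1) by auto

lemma proj_inner: "x \<in> inner \<Longrightarrow> proj x = owner x"
  unfolding proj_def inner_iff by simp

lemma proj_edge:
  assumes "{u, v} \<in> E"
  shows "proj u = proj v \<or> support_adj (proj u) (proj v)"
proof -
  have proj_W_neighbor: "proj y = s" if "s \<in> W" "{s, y} \<in> E" for s y
  proof -
    have "proj (pendant s) = s"
      using owner_pendant[OF that(1)] pendant_notin_W[OF that(1)] unfolding proj_def by simp
    then show ?thesis using W_neighbor_cases[OF that] proj_inner by auto
  qed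
  show ?thesis
  proof (cases "u \<in> W \<or> v \<in> W")
    case True
    then show ?thesis
      using proj_W_neighbor assms edge_sym unfolding proj_def by metis
  next
    case False
    then have "u \<in> inner" "v \<in> inner"
      using inner_if_adjacent_outside_W edgeD assms edge_sym by blast+
    then show ?thesis using assms proj_inner unfolding support_adj_def by auto
  qed
qed

lemma no_support_adj_cycle:
  assumes "k \<ge> 3" "inj_on d {..<k}" "\<And>i. i < k \<Longrightarrow> support_adj (d i) (d (Suc i mod k))"
  shows False
proof -
  have "\<exists>a b. a \<in> inner \<and> b \<in> inner \<and> {a, b} \<in> E \<and> owner a = d i \<and> owner b = d (Suc i mod k)"
    if "i < k" for i
    using assms(3)[OF that] unfolding support_adj_def by blast
  then obtain x y where xy: "\<And>i. i < k \<Longrightarrow> x i \<in> inner \<and> y i \<in> inner \<and> {x i, y i} \<in> E \<and>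
      owner (x i) = d i \<and> owner (y i) = d (Suc i mod k)"
    by metis
  text \<open>The lifted cycle: the path \<open>y i, d (i + 1), x (i + 1)\<close> lies in the fibre of
    \<open>d (i + 1)\<close> under \<open>proj\<close>, and consecutive paths are joined by the edges \<open>{x i, y i}\<close>.\<close>
  define seg where "seg i = (if y i = x (Suc i mod k) then [x (Suc i mod k)]
    else [y i, d (Suc i mod k), x (Suc i mod k)])" for i
  have seg: "seg i \<noteq> [] \<and> walk V E (seg i) \<and> distinct (seg i)"
    and proj_seg: "\<And>z. z \<in> set (seg i) \<Longrightarrow> proj z = d (Suc i mod k)"
    and link: "{last (seg i), hd (seg (Suc i mod k))} \<in> E" if i: "i < k" for i
  proof -
    define j where "j = Suc i mod k"
    have j: "j < k" using i assms(1) unfolding j_def by simp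
    have dW: "d j \<in> W" using xy[OF j] inner_owner(1) by metis
    then have in_V: "x j \<in> V" "y i \<in> V" "d j \<in> V"
      using xy[OF i] xy[OF j] inner_iff W_subset by auto
    have "{y i, d j} \<in> E" "{d j, x j} \<in> E"
      using xy[OF i] xy[OF j] inner_owner(2) edge_sym unfolding j_def by metis+
    moreover have "y i \<noteq> d j" "d j \<noteq> x j"
      using xy[OF i] xy[OF j] dW inner_iff by auto
    ultimately show "seg i \<noteq> [] \<and> walk V E (seg i) \<and> distinct (seg i)"
      using in_V unfolding seg_def j_def[symmetric] by auto
    have "proj (d j) = d j" using dW unfolding proj_def by simp
    moreover have "proj (y i) = d j" "proj (x j) = d j"
      using xy[OF i] xy[OF j] proj_inner unfolding j_def by auto
    ultimately show "proj z = d (Suc i mod k)" if "z \<in> set (seg i)" for z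
      using that unfolding seg_def j_def[symmetric] by (auto split: if_splits)
    show "{last (seg i), hd (seg (Suc i mod k))} \<in> E"
      using xy[OF j] unfolding seg_def j_def[symmetric] by auto
  qed
  have succ: "Suc i mod k = (if Suc i = k then 0 else Suc i)" if "i < k" for i
    using that by (cases "Suc i = k") simp_all
  have disjoint: "set (seg i) \<inter> set (seg i') = {}" if "i < k" "i' < k" "i \<noteq> i'" for i i'
  proof -
    have "Suc i mod k \<noteq> Suc i' mod k"
      unfolding succ[OF that(1)] succ[OF that(2)] using that by simp
    moreover have "Suc i mod k < k" "Suc i' mod k < k" using assms(1) by simp_all
    ultimately have ne: "d (Suc i mod k) \<noteq> d (Suc i' mod k)"
      using assms(2) by (auto dest: inj_onD)
    show ?thesis
    proof (rule equals0I)
      fix z assume "z \<in> set (seg i) \<inter> set (seg i')"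
      then have "z \<in> set (seg i)" "z \<in> set (seg i')" by auto
      then show False using proj_seg[OF that(1)] proj_seg[OF that(2)] ne by metis
    qed
  qed
  have "has_cycle V E"
    using assms(1) seg disjoint link by (rule has_cycle_of_segments)
  then show False using tree unfolding tree_def by simp
qed

lemma card_W_ge_2: "card W \<ge> 2"
proof -
  obtain v where "v \<in> V" using card_ge_6 by fastforce
  then obtain s where s: "s \<in> W" using adjacent_W by blast
  then have "s \<in> V" "pendant s \<in> V" using W_subset pendant(1) by auto
  then obtain y where y: "{s, y} \<in> E" "y \<noteq> pendant s"
    using pendant(2)[OF s] W_not_leaf[OF s] by (rule non_leaf_other_neighbor)
  then have y_inner: "y \<in> inner" "owner y = s" using W_neighbor_cases[OF s] by auto
  then obtain z where "z \<in> inner" "owner z \<noteq> s" using inner_other_neighbor by metis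
  then have "{s, owner z} \<subseteq> W" "card {s, owner z} = 2" using s inner_owner(1) by auto
  then show ?thesis using card_mono[OF finite_W] by metis
qed

end

section \<open>The tree \<open>R\<close> and the isomorphism with \<open>R(P)\<close>\<close>

locale labelled_weak_supports_max_packing = weak_supports_max_packing V E
  for V :: "'a set" and E :: "'a set set" +
  fixes h :: "'a \<Rightarrow> 'b"
  assumes inj_h: "inj_on h V"
begin

definition base_V :: "'b set" where
  "base_V = h ` W"

definition base_E :: "'b set set" where
  "base_E = {{h a, h b} | a b. support_adj a b}"

definition base_P :: "'b \<Rightarrow> 'b set set" where
  "base_P n = {h ` block x | x. x \<in> inner \<and> h (owner x) = n}"

lemma inj_on_h_W: "inj_on h W"
  using inj_on_subset[OF inj_h W_subset] .

lemma h_eq_iff: "a \<in> W \<Longrightarrow> b \<in> W \<Longrightarrow> h a = h b \<longleftrightarrow> a = b"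
  using inj_on_h_W by (auto dest: inj_onD)

lemma base_E_iff:
  assumes "a \<in> W" "b \<in> W"
  shows "{h a, h b} \<in> base_E \<longleftrightarrow> support_adj a b"
proof
  assume "{h a, h b} \<in> base_E"
  then obtain a' b' where ab: "{h a, h b} = {h a', h b'}" "support_adj a' b'"
    unfolding base_E_def by blast
  then have "a' \<in> W" "b' \<in> W" using support_adjD by auto
  then have "a = a' \<and> b = b' \<or> a = b' \<and> b = a'"
    using ab(1) assms h_eq_iff by (auto simp: doubleton_eq_iff)
  then show "support_adj a b" using ab(2) support_adj_sym by blast
qed (auto simp: base_E_def)

lemma graph_base: "graph base_V base_E"
  unfolding graph_def base_V_def base_E_def
  using finite_W support_adjD h_eq_iff by blast

lemma neighbors_base: "s \<in> W \<Longrightarrow> neighbors base_V base_E (h s) = h ` {t \<in> W. support_adj s t}"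
  unfolding neighbors_def base_V_def using base_E_iff by auto

lemma base_P_eq: "s \<in> W \<Longrightarrow> base_P (h s) = {h ` block x | x. x \<in> inner \<and> owner x = s}"
  unfolding base_P_def using h_eq_iff inner_owner(1) by metis

lemma partition_base:
  assumes s: "s \<in> W"
  shows "partition_on (neighbors base_V base_E (h s)) (base_P (h s))"
proof (rule partition_onI)
  have "\<Union> {block x | x. x \<in> inner \<and> owner x = s} = {t \<in> W. support_adj s t}"
    using block_subset_W support_adj_block
    unfolding support_adj_def block_def by blast
  then show "\<Union> (base_P (h s)) = neighbors base_V base_E (h s)"
    unfolding base_P_eq[OF s] neighbors_base[OF s] by blast
next
  fix p q assume "p \<in> base_P (h s)" "q \<in> base_P (h s)" "p \<noteq> q"
  then obtain x x' where x: "x \<in> inner" "owner x = s" "p = h ` block x"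
    and x': "x' \<in> inner" "owner x' = s" "q = h ` block x'"
    unfolding base_P_eq[OF s] by blast
  then have "block x \<inter> block x' = {}" using block_disjoint \<open>p \<noteq> q\<close> by blast
  then have "h ` block x \<inter> h ` block x' = {}"
    using inj_on_image_Int[OF inj_on_h_W block_subset_W block_subset_W, of x x'] by simp
  then show "disjnt p q" using x(3) x'(3) unfolding disjnt_def by simp
next
  show "{} \<notin> base_P (h s)"
    unfolding base_P_eq[OF s] using block_nonempty by blast
qed

lemma connected_base: "connected_graph base_V base_E"
  unfolding connected_graph_def
proof (intro ballI)
  fix m n assume "m \<in> base_V" "n \<in> base_V"
  then obtain a b where ab: "a \<in> W" "m = h a" "b \<in> W" "n = h b" unfolding base_V_def by blast
  then obtain xs where xs: "walk V E xs" "hd xs = a" "last xs = b"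
    using tree W_subset unfolding tree_def connected_graph_def by blast
  let ?ys = "map (\<lambda>v. h (proj v)) xs"
  have "xs \<noteq> []" "set xs \<subseteq> V" using xs(1) unfolding walk_def by auto
  moreover have "?ys ! i = ?ys ! Suc i \<or> {?ys ! i, ?ys ! Suc i} \<in> base_E"
    if "Suc i < length ?ys" for i
  proof -
    have e: "{xs ! i, xs ! Suc i} \<in> E" using xs(1) that unfolding walk_def by simp
    then have "proj (xs ! i) \<in> W" "proj (xs ! Suc i) \<in> W" using proj_in_W edgeD by auto
    then show ?thesis using proj_edge[OF e] base_E_iff that by auto
  qed
  moreover have "set ?ys \<subseteq> base_V" using \<open>set xs \<subseteq> V\<close> proj_in_W unfolding base_V_def by auto
  ultimately obtain zs where "walk base_V base_E zs" "hd zs = hd ?ys" "last zs = last ?ys"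
    using walk_of_stuttering_walk[of ?ys base_V base_E] by auto
  moreover have "hd ?ys = m" "last ?ys = n"
    using \<open>xs \<noteq> []\<close> xs(2,3) ab unfolding proj_def by (simp_all add: hd_map last_map)
  ultimately show "\<exists>zs. walk base_V base_E zs \<and> hd zs = m \<and> last zs = n" by metis
qed

lemma acyclic_base: "\<not> has_cycle base_V base_E"
proof
  assume "has_cycle base_V base_E"
  then obtain c where c: "walk base_V base_E c" "length c \<ge> 3" "distinct c" "{last c, hd c} \<in> base_E"
    unfolding has_cycle_def by blast
  let ?k = "length c" and ?d = "\<lambda>i. inv_into W h (c ! i)"
  have in_image: "c ! i \<in> h ` W" if "i < ?k" for i
    using c(1) that nth_mem unfolding walk_def base_V_def by blast
  then have d: "?d i \<in> W" "h (?d i) = c ! i" if "i < ?k" for i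
    using that by (auto simp: inv_into_into f_inv_into_f)
  have "inj_on ?d {..<?k}"
    using d c(3) by (intro inj_onI) (metis lessThan_iff nth_eq_iff_index_eq)
  moreover have "support_adj (?d i) (?d (Suc i mod ?k))" if "i < ?k" for i
  proof -
    have "?k > 0" using that by linarith
    then have "Suc i mod ?k < ?k" by simp
    then show ?thesis
      using cycle_edge[OF c(1,4) that] base_E_iff d that by metis
  qed
  ultimately show False using no_support_adj_cycle c(2) by blast
qed

lemma tree_base: "tree base_V base_E"
  unfolding tree_def using graph_base connected_base acyclic_base card_W_ge_2
  unfolding base_V_def by auto

lemma card_base: "card base_V \<ge> 2"
  unfolding base_V_def using card_image[OF inj_on_h_W] card_W_ge_2 by simp

lemma nbr_partitions_base: "nbr_partitions base_V base_E base_P"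
  unfolding nbr_partitions_def using partition_base by (auto simp: base_V_def)


abbreviation "sub_V \<equiv> subdiv_V base_V base_E base_P"
abbreviation "sub_E \<equiv> subdiv_E base_V base_E base_P"

definition iso :: "'a \<Rightarrow> 'b sv" where
  "iso v = (if v \<in> W then Orig (h v)
    else if v \<in> pendant ` W then One (h (owner v))
    else Part (h (owner v)) (h ` block v))"

lemma iso_W: "v \<in> W \<Longrightarrow> iso v = Orig (h v)"
  unfolding iso_def by simp

lemma iso_pendant: "s \<in> W \<Longrightarrow> iso (pendant s) = One (h s)"
  unfolding iso_def using pendant_notin_W owner_pendant by simp

lemma iso_inner: "x \<in> inner \<Longrightarrow> iso x = Part (h (owner x)) (h ` block x)"
  unfolding iso_def inner_iff by simp

lemma vertex_cases:
  assumes "v \<in> V"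
  obtains (support) "v \<in> W" | (leaf) s where "s \<in> W" "v = pendant s" | (inner) "v \<in> inner"
  using assms inner_iff by blast

lemma base_P_block: "x \<in> inner \<Longrightarrow> h ` block x \<in> base_P (h (owner x))"
  unfolding base_P_def by blast

lemma inj_on_iso: "inj_on iso V"
proof (rule inj_onI)
  fix u v assume u: "u \<in> V" and v: "v \<in> V" and eq: "iso u = iso v"
  show "u = v"
    using u
  proof (cases rule: vertex_cases)
    case support
    show ?thesis
      using v support eq h_eq_iff by (cases rule: vertex_cases) (auto simp: iso_W iso_pendant iso_inner)
  next
    case (leaf s)
    show ?thesis
      using v leaf eq h_eq_iff by (cases rule: vertex_cases) (auto simp: iso_W iso_pendant iso_inner)
  next
    case inner
    show ?thesis
      using v
    proof (cases rule: vertex_cases)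
      case v_inner: inner
      then have "owner u = owner v" "block u = block v"
        using inner eq h_eq_iff inner_owner(1)
          inj_on_image_eq_iff[OF inj_on_h_W block_subset_W block_subset_W]
        by (auto simp: iso_inner)
      then show ?thesis using block_disjoint[OF inner v_inner] block_nonempty[OF inner] by auto
    qed (use inner eq in \<open>auto simp: iso_W iso_pendant iso_inner\<close>)
  qed
qed

lemma iso_image: "iso ` V = sub_V"
proof
  show "iso ` V \<subseteq> sub_V"
  proof
    fix y assume "y \<in> iso ` V"
    then obtain v where v: "v \<in> V" "y = iso v" by blast
    then show "y \<in> sub_V"
      by (cases rule: vertex_cases) (use inner_owner(1) base_P_block in
          \<open>auto simp: iso_W iso_pendant iso_inner subdiv_V_simps base_V_def\<close>)
  qed
next
  show "sub_V \<subseteq> iso ` V"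
  proof
    fix y assume y: "y \<in> sub_V"
    show "y \<in> iso ` V"
    proof (cases y)
      case (Orig n)
      then obtain s where "s \<in> W" "y = iso s" using y iso_W by (auto simp: subdiv_V_simps base_V_def)
      then show ?thesis using W_subset by blast
    next
      case (One n)
      then obtain s where "s \<in> W" "y = iso (pendant s)"
        using y iso_pendant by (auto simp: subdiv_V_simps base_V_def)
      then show ?thesis using pendant(1) by blast
    next
      case (Part n B)
      then obtain x where "x \<in> inner" "y = iso x"
        using y iso_inner by (auto simp: subdiv_V_simps base_P_def)
      then show ?thesis using inner_iff by blast
    qed
  qed
qed

lemma iso_edge_W:
  assumes "s \<in> W" "v \<in> V"
  shows "{s, v} \<in> E \<longleftrightarrow> {iso s, iso v} \<in> sub_E"
  using assms(2)
proof (cases rule: vertex_cases)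
  case support
  then show ?thesis using assms W_not_adjacent by (simp add: iso_W subdiv_E_iff)
next
  case (leaf t)
  have "{s, pendant t} \<in> E \<longleftrightarrow> s = t"
    using pendant_neighbor[OF leaf(1)] pendant(2)[OF leaf(1)] edge_sym by metis
  then show ?thesis
    using leaf assms h_eq_iff by (auto simp: iso_W iso_pendant subdiv_E_iff base_V_def)
next
  case inner
  have "{s, v} \<in> E \<longleftrightarrow> s = owner v"
    using owner_unique inner_owner(2) edge_sym assms inner inner_iff by metis
  then show ?thesis
    using inner assms h_eq_iff inner_owner(1) base_P_block
    by (auto simp: iso_W iso_inner subdiv_E_iff base_V_def)
qed

lemma iso_edge_pendant:
  assumes "s \<in> W" "v \<in> V" "v \<notin> W"
  shows "{pendant s, v} \<in> E \<longleftrightarrow> {iso (pendant s), iso v} \<in> sub_E"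
proof -
  have "{pendant s, v} \<notin> E"
  proof
    assume "{pendant s, v} \<in> E"
    then have "v = s" by (rule pendant_neighbor[OF assms(1)])
    then show False using assms by simp
  qed
  moreover have "{iso (pendant s), iso v} \<notin> sub_E"
    using assms(2)
    by (cases rule: vertex_cases) (use assms(1,3) in \<open>auto simp: iso_pendant iso_inner subdiv_E_iff\<close>)
  ultimately show ?thesis by simp
qed

lemma iso_edge_inner:
  assumes "u \<in> inner" "v \<in> inner"
  shows "{u, v} \<in> E \<longleftrightarrow> {iso u, iso v} \<in> sub_E"
proof -
  have W: "owner u \<in> W" "owner v \<in> W" using inner_owner(1) assms by auto
  have "{iso u, iso v} \<in> sub_E \<longleftrightarrow>
      {h (owner u), h (owner v)} \<in> base_E \<and> h (owner v) \<in> h ` block u \<and> h (owner u) \<in> h ` block v"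
    using assms base_P_block by (simp add: iso_inner subdiv_E_iff)
  also have "\<dots> \<longleftrightarrow> support_adj (owner u) (owner v) \<and> owner v \<in> block u \<and> owner u \<in> block v"
    using base_E_iff[OF W] inj_on_image_mem_iff[OF inj_on_h_W _ block_subset_W] W by simp
  finally show ?thesis using inner_edge_iff[OF assms] by simp
qed

lemma iso_edge_iff:
  assumes "u \<in> V" "v \<in> V"
  shows "{u, v} \<in> E \<longleftrightarrow> {iso u, iso v} \<in> sub_E"
proof -
  have sym: "{u, v} = {v, u}" "{iso u, iso v} = {iso v, iso u}" by (simp_all add: insert_commute)
  consider "u \<in> W" | "v \<in> W" | s where "s \<in> W" "u = pendant s" "v \<notin> W"
    | s where "s \<in> W" "v = pendant s" "u \<notin> W" | "u \<in> inner" "v \<in> inner"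
    using assms inner_iff by blast
  then show ?thesis
  proof cases
    case 1
    then show ?thesis using iso_edge_W assms by simp
  next
    case 2
    then show ?thesis using iso_edge_W[of v u] assms unfolding sym by simp
  next
    case (3 s)
    then show ?thesis using iso_edge_pendant assms by simp
  next
    case (4 s)
    then show ?thesis using iso_edge_pendant[of s u] assms unfolding sym by simp
  next
    case 5
    then show ?thesis by (rule iso_edge_inner)
  qed
qed

lemma graph_iso_base: "graph_iso V E sub_V sub_E"
  unfolding graph_iso_def bij_betw_def using inj_on_iso iso_image iso_edge_iff by blast

end

lemma in_O'_if_max_two_packing_weak_supports:
  assumes "tree V E" "card V \<ge> 6" "max_two_packing V E (weak_supports V E)"
  shows "in_O' V E"
proof -
  obtain h :: "'a \<Rightarrow> nat" where "inj_on h V"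
    using assms(1) unfolding tree_def graph_def by (metis finite_imp_inj_to_nat_seg)
  with assms interpret labelled_weak_supports_max_packing V E h by unfold_locales
  show ?thesis
    unfolding in_O'_def using tree_base card_base nbr_partitions_base graph_iso_base by blast
qed

theorem mainTheorem5:
  fixes V :: "'a set" and E :: "'a set set"
  assumes "tree V E" and "card V \<ge> 6"
  shows "in_O' V E \<longleftrightarrow> max_two_packing V E (weak_supports V E)"
  using max_two_packing_weak_supports_if_in_O' in_O'_if_max_two_packing_weak_supports assms by blast

end
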